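(* Let $X$ and $Y$ be Alexandroff spaces satisfying: (i) there is a bijection $b:\{S(x):x\in X\}\to\{S(y):y\in Y\}$; (ii) for each $x\in X$ there is a homeomorphism $f_x:S(x)\to b(S(x))$ (subspace topologies); (iii) for all $x_1,x_2\in X$, if $S(x_1)\cap S(x_2)\neq\emptyset$ then $f_{x_1}(S(x_1)\cap S(x_2))=f_{x_2}(S(x_1)\cap S(x_2))$. Then $X$ and $Y$ are homeomorphic.
   Context: A topological space $X$ is an Alexandroff space if arbitrary intersections of open sets are open. In an Alexandroff space, $S(x)$ denotes the minimal open neighborhood of $x$, i.e. the intersection of all open sets containing $x$, which is open. *)

theory Defs
  imports "HOL-Analysis.Analysis"
begin

text \<open>Alexandroff space: arbitrary (nonempty) intersections of open sets are open.
  The empty intersection is the whole space, which is always open.\<close>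
definition alexandroff_space :: "'a topology \<Rightarrow> bool" where
  "alexandroff_space X \<longleftrightarrow>
     (\<forall>\<U>. \<U> \<noteq> {} \<and> (\<forall>U\<in>\<U>. openin X U) \<longrightarrow> openin X (\<Inter>\<U>))"

definition min_nbhd :: "'a topology \<Rightarrow> 'a \<Rightarrow> 'a set" where
  "min_nbhd X x = \<Inter>{U. openin X U \<and> x \<in> U}"

end

theory Submission
  imports Defs
begin

text \<open>In an Alexandroff space the minimal neighbourhoods S(x) form a base, and \<open>y \<in> S(x)\<close>
  (the specialisation preorder) determines the topology: a bijection between Alexandroff spaces
  is a homeomorphism as soon as it preserves and reflects this relation. The local homeomorphisms
  \<open>f\<^sub>x\<close> carry minimal neighbourhoods to minimal neighbourhoods, and the compatibility condition
  (iii) forces \<open>b(S(y)) = S(f\<^sub>x(y))\<close> for \<open>y \<in> S(x)\<close>, so \<open>b\<close> is an isomorphism of the posets of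
  minimal neighbourhoods. Gluing the \<open>f\<^sub>x\<close>, each evaluated on the points of S(x) through a fixed
  representative of S(x), gives such a relation-preserving bijection.\<close>

lemma min_nbhd_refl: "x \<in> topspace X \<Longrightarrow> x \<in> min_nbhd X x"
  unfolding min_nbhd_def by auto

lemma min_nbhd_minimal: "openin X U \<Longrightarrow> x \<in> U \<Longrightarrow> min_nbhd X x \<subseteq> U"
  unfolding min_nbhd_def by auto

lemma min_nbhd_subset_topspace: "x \<in> topspace X \<Longrightarrow> min_nbhd X x \<subseteq> topspace X"
  by (simp add: min_nbhd_minimal)

lemma openin_min_nbhd:
  assumes "alexandroff_space X" and "x \<in> topspace X"
  shows "openin X (min_nbhd X x)"
proof -
  let ?\<U> = "{U. openin X U \<and> x \<in> U}"
  have "?\<U> \<noteq> {}"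
    using assms(2) openin_topspace by blast
  moreover have "\<forall>U\<in>?\<U>. openin X U"
    by simp
  ultimately have "openin X (\<Inter>?\<U>)"
    using assms(1) unfolding alexandroff_space_def by (simp only: simp_thms)
  then show ?thesis
    unfolding min_nbhd_def .
qed

lemma alexandroff_openin_iff:
  assumes "alexandroff_space X"
  shows "openin X U \<longleftrightarrow> U \<subseteq> topspace X \<and> (\<forall>x\<in>U. min_nbhd X x \<subseteq> U)"
proof
  assume U: "U \<subseteq> topspace X \<and> (\<forall>x\<in>U. min_nbhd X x \<subseteq> U)"
  have "\<Union>(min_nbhd X ` U) = U"
    using U unfolding min_nbhd_def by blast
  moreover have "openin X (\<Union>(min_nbhd X ` U))"
    using U openin_min_nbhd[OF assms] by (intro openin_Union) blast
  ultimately show "openin X U"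
    by simp
next
  assume "openin X U"
  then show "U \<subseteq> topspace X \<and> (\<forall>x\<in>U. min_nbhd X x \<subseteq> U)"
    using openin_subset unfolding min_nbhd_def by blast
qed

lemma mem_min_nbhd_iff_subset:
  assumes "alexandroff_space X" and "x \<in> topspace X" and "y \<in> topspace X"
  shows "y \<in> min_nbhd X x \<longleftrightarrow> min_nbhd X y \<subseteq> min_nbhd X x"
  using min_nbhd_minimal[OF openin_min_nbhd[OF assms(1,2)]] min_nbhd_refl[OF assms(3)] by blast

lemma min_nbhd_subtopology:
  assumes "openin X U" and "z \<in> U"
  shows "min_nbhd (subtopology X U) z = min_nbhd X z"
proof
  show "min_nbhd X z \<subseteq> min_nbhd (subtopology X U) z"
    unfolding min_nbhd_def openin_open_subtopology[OF assms(1)] by blast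
  have "min_nbhd (subtopology X U) z \<subseteq> V" if "openin X V" "z \<in> V" for V
    using that assms min_nbhd_minimal[of "subtopology X U" "V \<inter> U" z]
    by (auto simp: openin_open_subtopology)
  then show "min_nbhd (subtopology X U) z \<subseteq> min_nbhd X z"
    unfolding min_nbhd_def by blast
qed

lemma homeomorphic_map_image_min_nbhd:
  assumes g: "homeomorphic_map X Y g" and z: "z \<in> topspace X"
  shows "g ` min_nbhd X z = min_nbhd Y (g z)"
proof -
  have iff: "g w \<in> min_nbhd Y (g z) \<longleftrightarrow> w \<in> min_nbhd X z" if w: "w \<in> topspace X" for w
  proof
    assume gw: "g w \<in> min_nbhd Y (g z)"
    have "w \<in> U" if U: "openin X U" "z \<in> U" for U
    proof -
      have "openin Y (g ` U)"
        using homeomorphic_map_openness_eq[OF g] U(1) by blast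
      moreover have "g z \<in> g ` U"
        using U(2) by (rule imageI)
      ultimately have "g w \<in> g ` U"
        using gw by (blast dest: min_nbhd_minimal)
      moreover have "U \<subseteq> topspace X"
        using U(1) by (rule openin_subset)
      ultimately show "w \<in> U"
        using inj_on_image_mem_iff[OF homeomorphic_imp_injective_map[OF g] w] by blast
    qed
    then show "w \<in> min_nbhd X z"
      unfolding min_nbhd_def by blast
  next
    assume w_in: "w \<in> min_nbhd X z"
    have "g w \<in> V" if V: "openin Y V" "g z \<in> V" for V
    proof -
      have "openin X {x \<in> topspace X. g x \<in> V}"
        using homeomorphic_imp_continuous_map[OF g] V(1) by (rule openin_continuous_map_preimage)
      then have "min_nbhd X z \<subseteq> {x \<in> topspace X. g x \<in> V}"
        using z V(2) by (intro min_nbhd_minimal) auto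
      then show "g w \<in> V"
        using w_in by blast
    qed
    then show "g w \<in> min_nbhd Y (g z)"
      unfolding min_nbhd_def by blast
  qed
  have "min_nbhd Y (g z) \<subseteq> g ` topspace X"
    using homeomorphic_imp_surjective_map[OF g] z min_nbhd_subset_topspace[of "g z" Y] by blast
  then show ?thesis
    using iff min_nbhd_subset_topspace[OF z] by (auto simp: image_iff)
qed

lemma alexandroff_continuous_map:
  assumes X: "alexandroff_space X" and F: "F \<in> topspace X \<rightarrow> topspace Y"
    and mono: "\<And>x y. x \<in> topspace X \<Longrightarrow> y \<in> min_nbhd X x \<Longrightarrow> F y \<in> min_nbhd Y (F x)"
  shows "continuous_map X Y F"
  unfolding continuous_map_def
proof (intro conjI allI impI F)
  fix V assume V: "openin Y V"
  have "min_nbhd X x \<subseteq> {x \<in> topspace X. F x \<in> V}" if x: "x \<in> topspace X" "F x \<in> V" for x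
  proof
    fix y assume y: "y \<in> min_nbhd X x"
    have "y \<in> topspace X"
      using y min_nbhd_subset_topspace[OF x(1)] by blast
    moreover have "F y \<in> V"
      using mono[OF x(1) y] min_nbhd_minimal[OF V x(2)] by blast
    ultimately show "y \<in> {x \<in> topspace X. F x \<in> V}"
      by blast
  qed
  then show "openin X {x \<in> topspace X. F x \<in> V}"
    unfolding alexandroff_openin_iff[OF X] by blast
qed

lemma alexandroff_homeomorphic_map:
  assumes X: "alexandroff_space X" and Y: "alexandroff_space Y"
    and F: "bij_betw F (topspace X) (topspace Y)"
    and spec: "\<And>x y. x \<in> topspace X \<Longrightarrow> y \<in> topspace X \<Longrightarrow>
                 F y \<in> min_nbhd Y (F x) \<longleftrightarrow> y \<in> min_nbhd X x"
  shows "homeomorphic_map X Y F"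
proof -
  define G where "G = inv_into (topspace X) F"
  have G: "G \<in> topspace Y \<rightarrow> topspace X"
    unfolding G_def using F by (auto simp: bij_betw_def inv_into_into)
  have GF: "\<And>x. x \<in> topspace X \<Longrightarrow> G (F x) = x" and FG: "\<And>y. y \<in> topspace Y \<Longrightarrow> F (G y) = y"
    unfolding G_def using F by (auto simp: bij_betw_def f_inv_into_f)
  have "continuous_map X Y F"
  proof (rule alexandroff_continuous_map[OF X])
    show "F \<in> topspace X \<rightarrow> topspace Y"
      using F by (auto simp: bij_betw_def)
    fix x y assume x: "x \<in> topspace X" and y: "y \<in> min_nbhd X x"
    then have "y \<in> topspace X"
      using min_nbhd_subset_topspace[OF x] by blast
    then show "F y \<in> min_nbhd Y (F x)"
      using spec[OF x] y by blast
  qed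
  moreover have "continuous_map Y X G"
  proof (rule alexandroff_continuous_map[OF Y G])
    fix x y assume x: "x \<in> topspace Y" and y: "y \<in> min_nbhd Y x"
    then have "y \<in> topspace Y"
      using min_nbhd_subset_topspace[OF x] by blast
    then have "F (G y) \<in> min_nbhd Y (F (G x))"
      using FG x y by simp
    then show "G y \<in> min_nbhd X (G x)"
      using spec G x \<open>y \<in> topspace Y\<close> by blast
  qed
  ultimately have "homeomorphic_maps X Y F G"
    unfolding homeomorphic_maps_def using GF FG by blast
  then show ?thesis
    by (rule homeomorphic_maps_imp_map)
qed

locale min_nbhd_gluing =
  fixes X :: "'a topology" and Y :: "'b topology"
    and b :: "'a set \<Rightarrow> 'b set" and f :: "'a \<Rightarrow> 'a \<Rightarrow> 'b"
  assumes alexandroff_X: "alexandroff_space X" and alexandroff_Y: "alexandroff_space Y"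
    and bij_b: "bij_betw b (min_nbhd X ` topspace X) (min_nbhd Y ` topspace Y)"
    and homeomorphic_f: "\<And>x. x \<in> topspace X \<Longrightarrow>
           homeomorphic_map (subtopology X (min_nbhd X x))
                            (subtopology Y (b (min_nbhd X x))) (f x)"
    and compatible_f: "\<And>x1 x2. x1 \<in> topspace X \<Longrightarrow> x2 \<in> topspace X \<Longrightarrow>
           min_nbhd X x1 \<inter> min_nbhd X x2 \<noteq> {} \<Longrightarrow>
           f x1 ` (min_nbhd X x1 \<inter> min_nbhd X x2) = f x2 ` (min_nbhd X x1 \<inter> min_nbhd X x2)"
begin

abbreviation (input) S where "S \<equiv> min_nbhd X"
abbreviation (input) S' where "S' \<equiv> min_nbhd Y"

lemma b_min_nbhd_obtain:
  assumes "x \<in> topspace X"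
  obtains t where "t \<in> topspace Y" "b (S x) = S' t"
  using bij_betw_apply[OF bij_b] assms by blast

lemma b_min_nbhd_subset_topspace: "x \<in> topspace X \<Longrightarrow> b (S x) \<subseteq> topspace Y"
  by (metis b_min_nbhd_obtain min_nbhd_subset_topspace)

lemma b_eq_iff:
  "x \<in> topspace X \<Longrightarrow> y \<in> topspace X \<Longrightarrow> b (S x) = b (S y) \<longleftrightarrow> S x = S y"
  using inj_on_eq_iff[OF bij_betw_imp_inj_on[OF bij_b] imageI imageI] .

lemma topspace_subtopology_min_nbhd: "x \<in> topspace X \<Longrightarrow> topspace (subtopology X (S x)) = S x"
  by (rule topspace_subtopology_subset[OF min_nbhd_subset_topspace])

lemma image_f_min_nbhd_self:
  assumes x: "x \<in> topspace X"
  shows "f x ` S x = b (S x)"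
proof -
  have "f x ` topspace (subtopology X (S x)) = topspace (subtopology Y (b (S x)))"
    using homeomorphic_f[OF x] by (rule homeomorphic_imp_surjective_map)
  then show ?thesis
    using topspace_subtopology_min_nbhd[OF x]
      topspace_subtopology_subset[OF b_min_nbhd_subset_topspace[OF x]] by simp
qed

lemma inj_on_f:
  assumes x: "x \<in> topspace X"
  shows "inj_on (f x) (S x)"
proof -
  have "inj_on (f x) (topspace (subtopology X (S x)))"
    using homeomorphic_f[OF x] by (rule homeomorphic_imp_injective_map)
  then show ?thesis
    using topspace_subtopology_min_nbhd[OF x] by simp
qed

lemma image_f_min_nbhd:
  assumes x: "x \<in> topspace X" and y: "y \<in> S x"
  shows "f x ` S y = S' (f x y)"
proof -
  obtain t where t: "t \<in> topspace Y" "b (S x) = S' t"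
    using x by (rule b_min_nbhd_obtain)
  have "y \<in> topspace (subtopology X (S x))"
    using y topspace_subtopology_min_nbhd[OF x] by simp
  then have "f x ` min_nbhd (subtopology X (S x)) y = min_nbhd (subtopology Y (S' t)) (f x y)"
    using homeomorphic_map_image_min_nbhd homeomorphic_f[OF x] t(2) by metis
  moreover have "f x y \<in> S' t"
    using image_f_min_nbhd_self[OF x] y t(2) by blast
  ultimately show ?thesis
    using y by (simp add: min_nbhd_subtopology openin_min_nbhd alexandroff_X alexandroff_Y x t(1))
qed

text \<open>Condition (iii) enters only here: for \<open>y \<in> S x\<close> it says \<open>f\<^sub>x(S y) = f\<^sub>y(S y) = b(S y)\<close>.\<close>

lemma b_min_nbhd_eq:
  assumes x: "x \<in> topspace X" and y: "y \<in> S x"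
  shows "b (S y) = S' (f x y)"
proof -
  have yX: "y \<in> topspace X"
    using y min_nbhd_subset_topspace[OF x] by blast
  have "S x \<inter> S y = S y"
    using mem_min_nbhd_iff_subset[OF alexandroff_X x yX] y by blast
  then have "f x ` S y = f y ` S y"
    using compatible_f[OF x yX] min_nbhd_refl[OF yX] by auto
  then show ?thesis
    using image_f_min_nbhd_self[OF yX] image_f_min_nbhd[OF x y] by simp
qed

lemma b_subset_iff:
  assumes x: "x \<in> topspace X" and y: "y \<in> topspace X"
  shows "b (S y) \<subseteq> b (S x) \<longleftrightarrow> S y \<subseteq> S x"
proof
  assume sub: "S y \<subseteq> S x"
  then have "y \<in> S x"
    using min_nbhd_refl[OF y] by blast
  then have "b (S y) = f x ` S y"
    using b_min_nbhd_eq[OF x] image_f_min_nbhd[OF x] by simp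
  also have "\<dots> \<subseteq> f x ` S x"
    using sub by (rule image_mono)
  finally show "b (S y) \<subseteq> b (S x)"
    using image_f_min_nbhd_self[OF x] by simp
next
  assume sub: "b (S y) \<subseteq> b (S x)"
  obtain t where t: "t \<in> topspace Y" "b (S y) = S' t"
    using y by (rule b_min_nbhd_obtain)
  then have "t \<in> f x ` S x"
    using sub min_nbhd_refl[OF t(1)] image_f_min_nbhd_self[OF x] by blast
  then obtain z where z: "z \<in> S x" "t = f x z"
    by blast
  then have zX: "z \<in> topspace X"
    using min_nbhd_subset_topspace[OF x] by blast
  have "S z = S y"
    using b_min_nbhd_eq[OF x z(1)] t(2) z(2) b_eq_iff[OF zX y] by simp
  then show "S y \<subseteq> S x"
    using mem_min_nbhd_iff_subset[OF alexandroff_X x zX] z(1) by simp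
qed

text \<open>The maps \<open>f\<^sub>x\<close> agree only setwise on overlaps, so the glued map evaluates every point
  through one chosen representative of its minimal neighbourhood.\<close>

definition rep :: "'a \<Rightarrow> 'a" where
  "rep x = (SOME w. w \<in> topspace X \<and> S w = S x)"

lemma rep_in_topspace: "x \<in> topspace X \<Longrightarrow> rep x \<in> topspace X"
  and min_nbhd_rep: "x \<in> topspace X \<Longrightarrow> S (rep x) = S x"
  unfolding rep_def by (metis (mono_tags, lifting) someI)+

lemma rep_cong: "S x = S y \<Longrightarrow> rep x = rep y"
  unfolding rep_def by simp

definition glued :: "'a \<Rightarrow> 'b" where
  "glued x = f (rep x) x"

lemma min_nbhd_glued:
  assumes x: "x \<in> topspace X"
  shows "S' (glued x) = b (S x)"
  using b_min_nbhd_eq[OF rep_in_topspace[OF x]] min_nbhd_rep[OF x] min_nbhd_refl[OF x]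
  unfolding glued_def by simp

lemma glued_in_topspace:
  assumes x: "x \<in> topspace X"
  shows "glued x \<in> topspace Y"
proof -
  have "glued x \<in> f (rep x) ` S (rep x)"
    unfolding glued_def using min_nbhd_rep[OF x] min_nbhd_refl[OF x] by simp
  then show ?thesis
    using image_f_min_nbhd_self[OF rep_in_topspace[OF x]]
      b_min_nbhd_subset_topspace[OF rep_in_topspace[OF x]] by blast
qed

lemma inj_on_glued: "inj_on glued (topspace X)"
proof (rule inj_onI)
  fix x y assume x: "x \<in> topspace X" and y: "y \<in> topspace X" and eq: "glued x = glued y"
  then have "b (S x) = b (S y)"
    using min_nbhd_glued[OF x] min_nbhd_glued[OF y] by simp
  then have "S x = S y"
    using b_eq_iff[OF x y] by simp
  then have "rep y = rep x" "x \<in> S (rep x)" "y \<in> S (rep x)"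
    using rep_cong[of x y] min_nbhd_rep[OF x] min_nbhd_refl[OF x] min_nbhd_refl[OF y] by auto
  moreover have "f (rep x) x = f (rep x) y"
    using eq \<open>rep y = rep x\<close> unfolding glued_def by simp
  ultimately show "x = y"
    using inj_onD[OF inj_on_f[OF rep_in_topspace[OF x]]] by blast
qed

lemma glued_surj: "topspace Y \<subseteq> glued ` topspace X"
proof
  fix t assume t: "t \<in> topspace Y"
  then have "S' t \<in> b ` S ` topspace X"
    using bij_betw_imp_surj_on[OF bij_b] by blast
  then obtain x where x: "x \<in> topspace X" "b (S x) = S' t"
    by blast
  have rx: "rep x \<in> topspace X" "S (rep x) = S x"
    using rep_in_topspace[OF x(1)] min_nbhd_rep[OF x(1)] .
  have "t \<in> f (rep x) ` S x"
    using image_f_min_nbhd_self[OF rx(1)] rx(2) x(2) min_nbhd_refl[OF t] by simp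
  then obtain z where z: "z \<in> S x" "t = f (rep x) z"
    by blast
  have zX: "z \<in> topspace X"
    using z(1) min_nbhd_subset_topspace[OF x(1)] by blast
  have "b (S z) = b (S x)"
    using b_min_nbhd_eq[OF rx(1)] rx(2) z x(2) by simp
  then have "rep z = rep x"
    using b_eq_iff[OF zX x(1)] rep_cong by blast
  then have "glued z = t"
    using z(2) unfolding glued_def by simp
  then show "t \<in> glued ` topspace X"
    using zX by blast
qed

lemma bij_glued: "bij_betw glued (topspace X) (topspace Y)"
  using inj_on_glued glued_in_topspace glued_surj by (auto intro!: bij_betw_imageI)

lemma glued_mem_min_nbhd_iff:
  assumes x: "x \<in> topspace X" and y: "y \<in> topspace X"
  shows "glued y \<in> S' (glued x) \<longleftrightarrow> y \<in> S x"
proof -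
  have "glued y \<in> S' (glued x) \<longleftrightarrow> S' (glued y) \<subseteq> S' (glued x)"
    using glued_in_topspace x y by (intro mem_min_nbhd_iff_subset[OF alexandroff_Y])
  also have "\<dots> \<longleftrightarrow> S y \<subseteq> S x"
    using min_nbhd_glued b_subset_iff x y by simp
  finally show ?thesis
    using mem_min_nbhd_iff_subset[OF alexandroff_X x y] by simp
qed

lemma homeomorphic_map_glued: "homeomorphic_map X Y glued"
  using alexandroff_X alexandroff_Y bij_glued glued_mem_min_nbhd_iff
  by (rule alexandroff_homeomorphic_map)

end

theorem theorem13:
  fixes X :: "'a topology" and Y :: "'b topology"
    and b :: "'a set \<Rightarrow> 'b set" and f :: "'a \<Rightarrow> 'a \<Rightarrow> 'b"
  assumes "alexandroff_space X" and "alexandroff_space Y"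
    and "bij_betw b (min_nbhd X ` topspace X) (min_nbhd Y ` topspace Y)"
    and "\<And>x. x \<in> topspace X \<Longrightarrow>
           homeomorphic_map (subtopology X (min_nbhd X x))
                            (subtopology Y (b (min_nbhd X x))) (f x)"
    and "\<And>x1 x2. x1 \<in> topspace X \<Longrightarrow> x2 \<in> topspace X \<Longrightarrow>
           min_nbhd X x1 \<inter> min_nbhd X x2 \<noteq> {} \<Longrightarrow>
           f x1 ` (min_nbhd X x1 \<inter> min_nbhd X x2) = f x2 ` (min_nbhd X x1 \<inter> min_nbhd X x2)"
  shows "X homeomorphic_space Y"
proof -
  interpret min_nbhd_gluing X Y b f
    using assms by unfold_locales
  show ?thesis
    using homeomorphic_map_glued by (rule homeomorphic_map_imp_homeomorphic_space)
qed

end
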